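(* Let $\star$ be a $t$-definer and $\{(X_\alpha,d_\alpha^\star)\}_{\alpha\in A}$ a family of $\star$-metric spaces with $d_\alpha^\star(x,y)\le 1$ for all $x,y\in X_\alpha$ and all $\alpha\in A$, and let $X=\bigoplus_{\alpha\in A}X_\alpha$ be their disjoint union. Define $d_q^\star(x,y)=d_\alpha^\star(x,y)$ if $x,y\in X_\alpha$ for some $\alpha\in A$, and $d_q^\star(x,y)=1$ otherwise. Then $(X,d_q^\star)$ is complete if and only if every $(X_\alpha,d_\alpha^\star)$ is complete.
   Context: A $t$-definer is a function $\star:[0,\infty)\times[0,\infty)\to[0,\infty)$ such that for all $a,b,c\ge 0$: $a\star b=b\star a$; $a\star(b\star c)=(a\star b)\star c$; if $a\le b$ then $a\star c\le b\star c$; $a\star 0=a$; and $\star$ is continuous in its first variable with respect to the Euclidean topology. Given a nonempty set $Y$, a $\star$-metric on $Y$ is a function $\rho:Y\times Y\to[0,\infty)$ such that for all $x,y,z\in Y$: $\rho(x,y)=0$ iff $x=y$; $\rho(x,y)=\rho(y,x)$; and $\rho(x,y)\le \rho(x,z)\star \rho(z,y)$. Under the stated bound, $d_q^\star$ is a $\star$-metric on $X$. In $(Y,\rho)$, a sequence $\{x_n\}$ is Cauchy if for every $\epsilon>0$ there is $k$ with $\rho(x_n,x_m)<\epsilon$ for all $m,n\ge k$; it converges to $x$ if for every $\epsilon>0$ there is $k$ with $\rho(x,x_n)<\epsilon$ for $n\ge k$; $(Y,\rho)$ is complete if every Cauchy sequence converges to a point of $Y$. *)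

theory Defs
  imports "HOL-Analysis.Analysis"
begin

text \<open>A t-definer: a binary operation on [0,\<infinity>) (represented as a real function,
  only its values on nonnegative arguments matter).\<close>
definition t_definer :: "(real \<Rightarrow> real \<Rightarrow> real) \<Rightarrow> bool" where
  "t_definer s \<longleftrightarrow>
     (\<forall>a b. 0 \<le> a \<longrightarrow> 0 \<le> b \<longrightarrow> 0 \<le> s a b) \<and>
     (\<forall>a b. 0 \<le> a \<longrightarrow> 0 \<le> b \<longrightarrow> s a b = s b a) \<and>
     (\<forall>a b c. 0 \<le> a \<longrightarrow> 0 \<le> b \<longrightarrow> 0 \<le> c \<longrightarrow> s a (s b c) = s (s a b) c) \<and>
     (\<forall>a b c. 0 \<le> a \<longrightarrow> 0 \<le> b \<longrightarrow> 0 \<le> c \<longrightarrow> a \<le> b \<longrightarrow> s a c \<le> s b c) \<and>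
     (\<forall>a. 0 \<le> a \<longrightarrow> s a 0 = a) \<and>
     (\<forall>c. 0 \<le> c \<longrightarrow> continuous_on {0..} (\<lambda>a. s a c))"

definition star_metric :: "(real \<Rightarrow> real \<Rightarrow> real) \<Rightarrow> 'a set \<Rightarrow> ('a \<Rightarrow> 'a \<Rightarrow> real) \<Rightarrow> bool" where
  "star_metric s Y \<rho> \<longleftrightarrow> Y \<noteq> {} \<and>
     (\<forall>x\<in>Y. \<forall>y\<in>Y. 0 \<le> \<rho> x y) \<and>
     (\<forall>x\<in>Y. \<forall>y\<in>Y. \<rho> x y = 0 \<longleftrightarrow> x = y) \<and>
     (\<forall>x\<in>Y. \<forall>y\<in>Y. \<rho> x y = \<rho> y x) \<and>
     (\<forall>x\<in>Y. \<forall>y\<in>Y. \<forall>z\<in>Y. \<rho> x y \<le> s (\<rho> x z) (\<rho> z y))"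

definition sm_cauchy :: "('a \<Rightarrow> 'a \<Rightarrow> real) \<Rightarrow> (nat \<Rightarrow> 'a) \<Rightarrow> bool" where
  "sm_cauchy \<rho> u \<longleftrightarrow> (\<forall>\<epsilon>>0. \<exists>k. \<forall>m\<ge>k. \<forall>n\<ge>k. \<rho> (u n) (u m) < \<epsilon>)"

definition sm_converges :: "('a \<Rightarrow> 'a \<Rightarrow> real) \<Rightarrow> (nat \<Rightarrow> 'a) \<Rightarrow> 'a \<Rightarrow> bool" where
  "sm_converges \<rho> u x \<longleftrightarrow> (\<forall>\<epsilon>>0. \<exists>k. \<forall>n\<ge>k. \<rho> x (u n) < \<epsilon>)"

definition sm_complete :: "'a set \<Rightarrow> ('a \<Rightarrow> 'a \<Rightarrow> real) \<Rightarrow> bool" where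
  "sm_complete Y \<rho> \<longleftrightarrow>
     (\<forall>u. (\<forall>n. u n \<in> Y) \<longrightarrow> sm_cauchy \<rho> u \<longrightarrow> (\<exists>x\<in>Y. sm_converges \<rho> u x))"

text \<open>Metric on the disjoint union (Sigma A X) of the family.\<close>
definition dq :: "('i \<Rightarrow> 'a \<Rightarrow> 'a \<Rightarrow> real) \<Rightarrow> ('i \<times> 'a) \<Rightarrow> ('i \<times> 'a) \<Rightarrow> real" where
  "dq d p q = (if fst p = fst q then d (fst p) (snd p) (snd q) else 1)"

end

theory Submission
  imports Defs
begin

text \<open>Points of different summands are at distance 1, so a Cauchy sequence of the disjoint union
  eventually stays in a single summand, where it is a Cauchy sequence of that summand; and a
  sequence in one summand converges in the union exactly when it converges in the summand.\<close>

lemma sm_completeD: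
  assumes "sm_complete Y \<rho>" "\<And>n. u n \<in> Y" "sm_cauchy \<rho> u"
  obtains x where "x \<in> Y" "sm_converges \<rho> u x"
  using assms unfolding sm_complete_def by blast

lemma sm_cauchy_shift:
  assumes "sm_cauchy \<rho> u"
  shows "sm_cauchy \<rho> (\<lambda>n. u (n + k))"
  unfolding sm_cauchy_def
proof (intro allI impI)
  fix \<epsilon> :: real
  assume "\<epsilon> > 0"
  then obtain j where "\<forall>m\<ge>j. \<forall>n\<ge>j. \<rho> (u n) (u m) < \<epsilon>"
    using assms unfolding sm_cauchy_def by blast
  then show "\<exists>j. \<forall>m\<ge>j. \<forall>n\<ge>j. \<rho> (u (n + k)) (u (m + k)) < \<epsilon>"
    by (intro exI[of _ j]) simp
qed

lemma sm_converges_unshift: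
  assumes "sm_converges \<rho> (\<lambda>n. u (n + k)) x"
  shows "sm_converges \<rho> u x"
  unfolding sm_converges_def
proof (intro allI impI)
  fix \<epsilon> :: real
  assume "\<epsilon> > 0"
  then obtain j where j: "\<forall>n\<ge>j. \<rho> x (u (n + k)) < \<epsilon>"
    using assms unfolding sm_converges_def by blast
  have "\<rho> x (u n) < \<epsilon>" if "n \<ge> j + k" for n
    using j[rule_format, of "n - k"] that by simp
  then show "\<exists>j. \<forall>n\<ge>j. \<rho> x (u n) < \<epsilon>"
    by blast
qed

lemma sm_cauchy_dq_Pair_iff:
  "sm_cauchy (dq d) (\<lambda>n. (\<alpha>, u n)) \<longleftrightarrow> sm_cauchy (d \<alpha>) u"
  by (simp add: sm_cauchy_def dq_def)

lemma sm_converges_dq_Pair_iff: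
  "sm_converges (dq d) (\<lambda>n. (\<alpha>, u n)) (\<beta>, x) \<longleftrightarrow> \<beta> = \<alpha> \<and> sm_converges (d \<alpha>) u x"
proof
  assume conv: "sm_converges (dq d) (\<lambda>n. (\<alpha>, u n)) (\<beta>, x)"
  then obtain k where "dq d (\<beta>, x) (\<alpha>, u k) < 1"
    unfolding sm_converges_def by (meson order.refl zero_less_one)
  then have "\<beta> = \<alpha>"
    by (auto simp: dq_def split: if_splits)
  with conv show "\<beta> = \<alpha> \<and> sm_converges (d \<alpha>) u x"
    by (simp add: sm_converges_def dq_def)
next
  assume "\<beta> = \<alpha> \<and> sm_converges (d \<alpha>) u x"
  then show "sm_converges (dq d) (\<lambda>n. (\<alpha>, u n)) (\<beta>, x)"
    by (simp add: sm_converges_def dq_def)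
qed

lemma sm_cauchy_dq_eventually_in_summand:
  assumes "sm_cauchy (dq d) v"
  obtains k \<alpha> u where "\<And>n. v (n + k) = (\<alpha>, u n)"
proof -
  obtain k where k: "\<forall>m\<ge>k. \<forall>n\<ge>k. dq d (v n) (v m) < 1"
    using assms unfolding sm_cauchy_def by (meson zero_less_one)
  have "fst (v (n + k)) = fst (v k)" for n
    using k[rule_format, of k "n + k"] by (auto simp: dq_def split: if_splits)
  then have "v (n + k) = (fst (v k), snd (v (n + k)))" for n
    by (simp add: prod_eq_iff)
  then show thesis
    by (rule that)
qed

lemma sm_complete_summand_if_sm_complete_dq:
  assumes complete: "sm_complete (Sigma A X) (dq d)" and "\<alpha> \<in> A"
  shows "sm_complete (X \<alpha>) (d \<alpha>)"
  unfolding sm_complete_def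
proof (intro allI impI)
  fix u
  assume "\<forall>n. u n \<in> X \<alpha>" "sm_cauchy (d \<alpha>) u"
  with \<open>\<alpha> \<in> A\<close> have "(\<alpha>, u n) \<in> Sigma A X" "sm_cauchy (dq d) (\<lambda>n. (\<alpha>, u n))" for n
    by (simp_all add: sm_cauchy_dq_Pair_iff)
  then obtain p where "p \<in> Sigma A X" "sm_converges (dq d) (\<lambda>n. (\<alpha>, u n)) p"
    by (rule sm_completeD[OF complete])
  then show "\<exists>x\<in>X \<alpha>. sm_converges (d \<alpha>) u x"
    by (cases p) (auto simp: sm_converges_dq_Pair_iff)
qed

lemma sm_complete_dq_if_sm_complete_summands:
  assumes complete: "\<And>\<alpha>. \<alpha> \<in> A \<Longrightarrow> sm_complete (X \<alpha>) (d \<alpha>)"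
  shows "sm_complete (Sigma A X) (dq d)"
  unfolding sm_complete_def
proof (intro allI impI)
  fix v
  assume v: "\<forall>n. v n \<in> Sigma A X" and cauchy: "sm_cauchy (dq d) v"
  obtain k \<alpha> u where tail: "\<And>n. v (n + k) = (\<alpha>, u n)"
    using sm_cauchy_dq_eventually_in_summand[OF cauchy] by blast
  have "(\<alpha>, u n) \<in> Sigma A X" for n
    using v[rule_format, of "n + k"] by (simp only: tail)
  then have "\<alpha> \<in> A" and summand: "\<And>n. u n \<in> X \<alpha>"
    by blast+
  have "sm_cauchy (d \<alpha>) u"
    using sm_cauchy_shift[OF cauchy, of k] by (simp only: tail sm_cauchy_dq_Pair_iff)
  with complete[OF \<open>\<alpha> \<in> A\<close>] summand obtain x where "x \<in> X \<alpha>" "sm_converges (d \<alpha>) u x"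
    by (rule sm_completeD)
  then have "sm_converges (dq d) (\<lambda>n. v (n + k)) (\<alpha>, x)"
    by (simp only: tail sm_converges_dq_Pair_iff simp_thms)
  then have "sm_converges (dq d) v (\<alpha>, x)"
    by (rule sm_converges_unshift)
  with \<open>\<alpha> \<in> A\<close> \<open>x \<in> X \<alpha>\<close> show "\<exists>p\<in>Sigma A X. sm_converges (dq d) v p"
    by blast
qed

theorem theorem4p13:
  fixes s :: "real \<Rightarrow> real \<Rightarrow> real"
    and A :: "'i set" and X :: "'i \<Rightarrow> 'a set" and d :: "'i \<Rightarrow> 'a \<Rightarrow> 'a \<Rightarrow> real"
  assumes "t_definer s"
    and "\<And>\<alpha>. \<alpha> \<in> A \<Longrightarrow> star_metric s (X \<alpha>) (d \<alpha>)"
    and "\<And>\<alpha> x y. \<alpha> \<in> A \<Longrightarrow> x \<in> X \<alpha> \<Longrightarrow> y \<in> X \<alpha> \<Longrightarrow> d \<alpha> x y \<le> 1"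
  shows "sm_complete (Sigma A X) (dq d) \<longleftrightarrow> (\<forall>\<alpha>\<in>A. sm_complete (X \<alpha>) (d \<alpha>))"
  using sm_complete_summand_if_sm_complete_dq sm_complete_dq_if_sm_complete_summands by meson

end
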